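(* Let $(\mathcal{A},[\cdot,\cdot],\varepsilon,\alpha)$ be a multiplicative color Hom-Lie algebra and $(M,[\cdot,\cdot]_M,\beta)$ an $\mathcal{A}$-module. Then for all integers $n\ge 2$ and $r\ge 1$, $\delta^n_r\circ\delta^{n-1}_r=0$ on $C^{n-1}_{\alpha,\beta}(\mathcal{A},M)$; i.e. $(\bigoplus_{n\ge 0}C^n_{\alpha,\beta}(\mathcal{A},M),\delta_r)$ is a cochain complex.
   Context: Let $\mathbb{K}$ be a field of characteristic $0$, $\Gamma$ an abelian group and $\varepsilon:\Gamma\times\Gamma\to\mathbb{K}^*$ a skew-symmetric bicharacter ($\varepsilon(a,b)\varepsilon(b,a)=1$, $\varepsilon(a,b+c)=\varepsilon(a,b)\varepsilon(a,c)$, $\varepsilon(a+b,c)=\varepsilon(a,c)\varepsilon(b,c)$); for homogeneous $x,y$, $\varepsilon(x,y)=\varepsilon(\bar x,\bar y)$ with $\bar x$ the degree, and for sums of elements $\varepsilon(x_1+\dots+x_k,y)$ means $\varepsilon(\bar x_1+\dots+\bar x_k,\bar y)$. A color Hom-Lie algebra is $(\mathcal{A},[\cdot,\cdot],\varepsilon,\alpha)$ with $\mathcal{A}$ a $\Gamma$-graded vector space, $[\cdot,\cdot]$ bilinear with $[\mathcal{A}_a,\mathcal{A}_b]\subseteq\mathcal{A}_{a+b}$, $\alpha$ even linear, $[x,y]=-\varepsilon(x,y)[y,x]$ and $\varepsilon(z,x)[\alpha(x),[y,z]]+\varepsilon(x,y)[\alpha(y),[z,x]]+\varepsilon(y,z)[\alpha(z),[x,y]]=0$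 for homogeneous $x,y,z$; it is multiplicative if $\alpha([x,y])=[\alpha(x),\alpha(y)]$. An $\mathcal{A}$-module is a triple $(M,[\cdot,\cdot]_M,\beta)$ with $M$ a $\Gamma$-graded vector space, $\beta:M\to M$ even linear and $[\cdot,\cdot]_M:\mathcal{A}\times M\to M$ bilinear with $[\mathcal{A}_a,M_b]\subseteq M_{a+b}$, such that $\beta([x,m]_M)=[\alpha(x),\beta(m)]_M$ and $[[x,y],\beta(m)]_M=[\alpha(x),[y,m]_M]_M-\varepsilon(x,y)[\alpha(y),[x,m]_M]_M$ for homogeneous $x,y$ and $m\in M$. $C^n(\mathcal{A},M)$ is the space of $n$-linear maps $f:\mathcal{A}^n\to M$ with $f(\dots,x_i,x_{i+1},\dots)=-\varepsilon(x_i,x_{i+1})f(\dots,x_{i+1},x_i,\dots)$ for homogeneous arguments; $f$ has degree $\gamma$ if it maps arguments of degrees $a_1,\dots,a_n$ into $M_{\gamma+a_1+\dots+a_n}$. $C^n_{\alpha,\beta}(\mathcal{A},M)=\{f\in C^n(\mathcal{A},M): f(\alpha(x_1),\dots,\alpha(x_n))=\beta(f(x_1,\dots,x_n))\}$. For $f\in C^n_{\alpha,\beta}(\mathcal{A},M)$ homogeneous of degree $\gamma$ and homogeneous $x_0,\dots,x_n$, define (and extend linearly) $$\delta^n_r(f)(x_0,\dots,x_n)=\sum_{0\le s<t\le n}(-1)^t\varepsilon(x_{s+1}+\dots+x_{t-1},x_t)\,f\big(\alpha(x_0),\dots,\alpha(x_{s-1}),[x_s,x_t],\alpha(x_{s+1}),\dots,\widehat{x_t},\dots,\alpha(x_n)\big)$$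 $$+\sum_{s=0}^n(-1)^s\varepsilon(\gamma+x_0+\dots+x_{s-1},x_s)\,[\alpha^{r+n-1}(x_s),f(x_0,\dots,\widehat{x_s},\dots,x_n)]_M,$$ where $\widehat{\cdot}$ denotes omission. *)

theory Defs
  imports Main "HOL.Vector_Spaces"
begin

definition graded_space :: "('k::field \<Rightarrow> 'v::ab_group_add \<Rightarrow> 'v) \<Rightarrow> ('g \<Rightarrow> 'v set) \<Rightarrow> bool" where
  "graded_space scale G \<longleftrightarrow>
     vector_space scale \<and>
     (\<forall>g. 0 \<in> G g \<and> (\<forall>x\<in>G g. \<forall>y\<in>G g. x + y \<in> G g) \<and> (\<forall>c. \<forall>x\<in>G g. scale c x \<in> G g)) \<and>
     (\<forall>x. \<exists>c. finite {g. c g \<noteq> 0} \<and> (\<forall>g. c g \<in> G g) \<and> x = (\<Sum>g\<in>{g. c g \<noteq> 0}. c g)) \<and>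
     (\<forall>c S. finite S \<and> (\<forall>g. c g \<in> G g) \<and> (\<Sum>g\<in>S. c g) = 0 \<longrightarrow> (\<forall>g\<in>S. c g = 0))"

definition homogeneous :: "('g \<Rightarrow> 'v set) \<Rightarrow> 'v \<Rightarrow> bool" where
  "homogeneous G x \<longleftrightarrow> (\<exists>g. x \<in> G g)"

text \<open>Degree of a homogeneous element (for 0 an arbitrary degree containing it is chosen;
  every formula below is insensitive to that choice).\<close>
definition deg :: "('g \<Rightarrow> 'v set) \<Rightarrow> 'v \<Rightarrow> 'g" where
  "deg G x = (SOME g. x \<in> G g)"

definition even_linear :: "('k::field \<Rightarrow> 'v::ab_group_add \<Rightarrow> 'v) \<Rightarrow> ('g \<Rightarrow> 'v set) \<Rightarrow> ('v \<Rightarrow> 'v) \<Rightarrow> bool" where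
  "even_linear scale G f \<longleftrightarrow> Vector_Spaces.linear scale scale f \<and> (\<forall>g x. x \<in> G g \<longrightarrow> f x \<in> G g)"

definition skew_bicharacter :: "('g::ab_group_add \<Rightarrow> 'g \<Rightarrow> 'k::field) \<Rightarrow> bool" where
  "skew_bicharacter eps \<longleftrightarrow>
     (\<forall>a b. eps a b \<noteq> 0) \<and>
     (\<forall>a b. eps a b * eps b a = 1) \<and>
     (\<forall>a b c. eps a (b + c) = eps a b * eps a c) \<and>
     (\<forall>a b c. eps (a + b) c = eps a c * eps b c)"

definition color_hom_lie_algebra ::
  "('k::field \<Rightarrow> 'a::ab_group_add \<Rightarrow> 'a) \<Rightarrow> ('g::ab_group_add \<Rightarrow> 'a set) \<Rightarrow>
   ('a \<Rightarrow> 'a \<Rightarrow> 'a) \<Rightarrow> ('g \<Rightarrow> 'g \<Rightarrow> 'k) \<Rightarrow> ('a \<Rightarrow> 'a) \<Rightarrow> bool" where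
  "color_hom_lie_algebra sA GA br eps alpha \<longleftrightarrow>
     graded_space sA GA \<and> skew_bicharacter eps \<and> even_linear sA GA alpha \<and>
     (\<forall>x. Vector_Spaces.linear sA sA (br x)) \<and> (\<forall>y. Vector_Spaces.linear sA sA (\<lambda>x. br x y)) \<and>
     (\<forall>a b x y. x \<in> GA a \<longrightarrow> y \<in> GA b \<longrightarrow> br x y \<in> GA (a + b)) \<and>
     (\<forall>a b x y. x \<in> GA a \<longrightarrow> y \<in> GA b \<longrightarrow> br x y = - sA (eps a b) (br y x)) \<and>
     (\<forall>a b c x y z. x \<in> GA a \<longrightarrow> y \<in> GA b \<longrightarrow> z \<in> GA c \<longrightarrow>
        sA (eps c a) (br (alpha x) (br y z)) + sA (eps a b) (br (alpha y) (br z x))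
        + sA (eps b c) (br (alpha z) (br x y)) = 0)"

definition multiplicative :: "('a \<Rightarrow> 'a \<Rightarrow> 'a) \<Rightarrow> ('a \<Rightarrow> 'a) \<Rightarrow> bool" where
  "multiplicative br alpha \<longleftrightarrow> (\<forall>x y. alpha (br x y) = br (alpha x) (alpha y))"

definition hom_lie_module ::
  "('k::field \<Rightarrow> 'a::ab_group_add \<Rightarrow> 'a) \<Rightarrow> ('g::ab_group_add \<Rightarrow> 'a set) \<Rightarrow>
   ('a \<Rightarrow> 'a \<Rightarrow> 'a) \<Rightarrow> ('g \<Rightarrow> 'g \<Rightarrow> 'k) \<Rightarrow> ('a \<Rightarrow> 'a) \<Rightarrow>
   ('k \<Rightarrow> 'm::ab_group_add \<Rightarrow> 'm) \<Rightarrow> ('g \<Rightarrow> 'm set) \<Rightarrow> ('a \<Rightarrow> 'm \<Rightarrow> 'm) \<Rightarrow> ('m \<Rightarrow> 'm) \<Rightarrow> bool" where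
  "hom_lie_module sA GA br eps alpha sM GM act beta \<longleftrightarrow>
     graded_space sM GM \<and> even_linear sM GM beta \<and>
     (\<forall>x. Vector_Spaces.linear sM sM (act x)) \<and> (\<forall>m. Vector_Spaces.linear sA sM (\<lambda>x. act x m)) \<and>
     (\<forall>a b x m. x \<in> GA a \<longrightarrow> m \<in> GM b \<longrightarrow> act x m \<in> GM (a + b)) \<and>
     (\<forall>a x m. x \<in> GA a \<longrightarrow> beta (act x m) = act (alpha x) (beta m)) \<and>
     (\<forall>a b x y m. x \<in> GA a \<longrightarrow> y \<in> GA b \<longrightarrow>
        act (br x y) (beta m) = act (alpha x) (act y m) - sM (eps a b) (act (alpha y) (act x m)))"

text \<open>An n-cochain is a map f on argument sequences (nat \<Rightarrow> 'a); only the first n arguments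
  x 0, ..., x (n-1) matter.\<close>
definition cochain_deg ::
  "('k::field \<Rightarrow> 'a::ab_group_add \<Rightarrow> 'a) \<Rightarrow> ('g::ab_group_add \<Rightarrow> 'a set) \<Rightarrow> ('g \<Rightarrow> 'g \<Rightarrow> 'k) \<Rightarrow>
   ('k \<Rightarrow> 'm::ab_group_add \<Rightarrow> 'm) \<Rightarrow> ('g \<Rightarrow> 'm set) \<Rightarrow> nat \<Rightarrow> 'g \<Rightarrow> ((nat \<Rightarrow> 'a) \<Rightarrow> 'm) \<Rightarrow> bool" where
  "cochain_deg sA GA eps sM GM n \<gamma> f \<longleftrightarrow>
     (\<forall>x y. (\<forall>i<n. x i = y i) \<longrightarrow> f x = f y) \<and>
     (\<forall>i<n. \<forall>x. Vector_Spaces.linear sA sM (\<lambda>v. f (x(i := v)))) \<and>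
     (\<forall>i x d. Suc i < n \<longrightarrow> (\<forall>j<n. x j \<in> GA (d j)) \<longrightarrow>
        f x = - sM (eps (d i) (d (Suc i))) (f (x(i := x (Suc i), Suc i := x i)))) \<and>
     (\<forall>x d. (\<forall>j<n. x j \<in> GA (d j)) \<longrightarrow> f x \<in> GM (\<gamma> + (\<Sum>j<n. d j)))"

definition alpha_beta_compatible :: "('a \<Rightarrow> 'a) \<Rightarrow> ('m \<Rightarrow> 'm) \<Rightarrow> ((nat \<Rightarrow> 'a) \<Rightarrow> 'm) \<Rightarrow> bool" where
  "alpha_beta_compatible alpha beta f \<longleftrightarrow> (\<forall>x. f (alpha \<circ> x) = beta (f x))"

definition bracket_args :: "('a \<Rightarrow> 'a \<Rightarrow> 'a) \<Rightarrow> ('a \<Rightarrow> 'a) \<Rightarrow> nat \<Rightarrow> nat \<Rightarrow> (nat \<Rightarrow> 'a) \<Rightarrow> nat \<Rightarrow> 'a" where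
  "bracket_args br alpha s t x = (\<lambda>k. if k < s then alpha (x k)
                                      else if k = s then br (x s) (x t)
                                      else if k < t then alpha (x k)
                                      else alpha (x (Suc k)))"

definition omit_arg :: "nat \<Rightarrow> (nat \<Rightarrow> 'a) \<Rightarrow> nat \<Rightarrow> 'a" where
  "omit_arg s x = (\<lambda>k. if k < s then x k else x (Suc k))"

definition coboundary ::
  "('g::ab_group_add \<Rightarrow> 'a set) \<Rightarrow> ('a \<Rightarrow> 'a \<Rightarrow> 'a) \<Rightarrow> ('g \<Rightarrow> 'g \<Rightarrow> 'k::field) \<Rightarrow> ('a \<Rightarrow> 'a) \<Rightarrow>
   ('k \<Rightarrow> 'm::ab_group_add \<Rightarrow> 'm) \<Rightarrow> ('a \<Rightarrow> 'm \<Rightarrow> 'm) \<Rightarrow> nat \<Rightarrow> nat \<Rightarrow> 'g \<Rightarrow>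
   ((nat \<Rightarrow> 'a) \<Rightarrow> 'm) \<Rightarrow> (nat \<Rightarrow> 'a) \<Rightarrow> 'm" where
  "coboundary GA br eps alpha sM act r n \<gamma> f x =
     (\<Sum>t\<in>{..n}. \<Sum>s<t.
        sM ((-1) ^ t * eps (\<Sum>k\<in>{s<..<t}. deg GA (x k)) (deg GA (x t)))
           (f (bracket_args br alpha s t x)))
   + (\<Sum>s\<in>{..n}.
        sM ((-1) ^ s * eps (\<gamma> + (\<Sum>k<s. deg GA (x k))) (deg GA (x s)))
           (act ((alpha ^^ (r + n - 1)) (x s)) (f (omit_arg s x))))"

end

theory Submission
  imports Defs
begin

text \<open>Evaluate delta(delta f) on (x_0, ..., x_n) by expanding the inner coboundary. This gives
  four double sums, according to whether the outer and the inner step bracket two arguments or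
  let one of them act on the module. After indexing every inner position by the position its
  argument had among the x_k, the terms cancel as follows. Two action-action terms, in which x_s
  and x_t act one after the other, cancel against the bracket-action term in which [x_s, x_t]
  acts: this is the module axiom. The other bracket-action terms cancel one by one against
  action-bracket terms. A bracket-bracket term built from two disjoint pairs cancels against the
  term performing the same two brackets in the other order; as this identifies the sum of these
  terms with its own negative, 2 \<noteq> 0 is needed here. The remaining bracket-bracket terms
  involve three arguments x_a, x_b, x_c, and these sum to an instance of the Hom-Jacobi identity.
  Multiplicativity of alpha makes the twisting powers of alpha agree throughout; of f only
  multilinearity is used, not its skew-symmetry.\<close>

section \<open>Index bookkeeping\<close>

definition index_pairs :: "nat \<Rightarrow> (nat \<times> nat) set" where
  "index_pairs M = {(s, t). s < t \<and> t \<le> M}"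

definition index_triples :: "nat \<Rightarrow> (nat \<times> nat \<times> nat) set" where
  "index_triples M = {(a, b, c). a < b \<and> b < c \<and> c \<le> M}"

text \<open>Position of the argument x_k, k \<noteq> w, in the sequence (x_0, ..., x_(w-1), x_(w+1), ...);
  inverse to the shift performed by omit_arg.\<close>
definition collapse :: "nat \<Rightarrow> nat \<Rightarrow> nat" where
  "collapse w k = (if k < w then k else k - 1)"

abbreviation pairs_avoiding :: "nat \<Rightarrow> nat \<Rightarrow> (nat \<times> nat) set" where
  "pairs_avoiding M w \<equiv> {(s, t)\<in>index_pairs M. s \<noteq> w \<and> t \<noteq> w}"

abbreviation pairs_avoiding_both :: "nat \<Rightarrow> nat \<Rightarrow> nat \<Rightarrow> (nat \<times> nat) set" where
  "pairs_avoiding_both M s t \<equiv> {(p, q)\<in>index_pairs M. p \<noteq> s \<and> p \<noteq> t \<and> q \<noteq> s \<and> q \<noteq> t}"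

definition prefix_sum :: "(nat \<Rightarrow> 'g::comm_monoid_add) \<Rightarrow> nat \<Rightarrow> 'g" where
  "prefix_sum e k = (\<Sum>j<k. e j)"

lemma finite_index_pairs [simp]: "finite (index_pairs M)"
  by (rule finite_subset[of _ "{..M} \<times> {..M}"]) (auto simp: index_pairs_def)

lemma finite_index_pairs_filter [simp]: "finite {(s, t). (s, t) \<in> index_pairs M \<and> Q s t}"
  by (rule finite_subset[of _ "index_pairs M"]) auto

lemma sum_index_pairs_lessThan:
  "(\<Sum>t\<in>{..M}. \<Sum>s<t. H s t) = (\<Sum>(s, t)\<in>index_pairs M. H s t)"
proof -
  have "(\<Sum>t\<in>{..M}. \<Sum>s<t. H s t) = (\<Sum>(t, s)\<in>(SIGMA t:{..M}. {..<t}). H s t)"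
    by (rule sum.Sigma) auto
  also have "\<dots> = (\<Sum>(s, t)\<in>index_pairs M. H s t)"
    by (rule sum.reindex_bij_witness[where i="\<lambda>(a, b). (b, a)" and j="\<lambda>(a, b). (b, a)"])
       (auto simp: index_pairs_def)
  finally show ?thesis .
qed

lemma sum_index_pairs_greaterThan:
  "(\<Sum>(s, t)\<in>index_pairs M. H s t) = (\<Sum>s\<in>{..M}. \<Sum>t\<in>{s<..M}. H s t)"
proof -
  have "(\<Sum>s\<in>{..M}. \<Sum>t\<in>{s<..M}. H s t) = (\<Sum>(s, t)\<in>(SIGMA s:{..M}. {s<..M}). H s t)"
    by (rule sum.Sigma) auto
  also have "\<dots> = (\<Sum>(s, t)\<in>index_pairs M. H s t)"
    by (rule sum.reindex_bij_witness[where i="\<lambda>p. p" and j="\<lambda>p. p"]) (auto simp: index_pairs_def)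
  finally show ?thesis by simp
qed

lemma sum_atMost_collapse:
  assumes "1 \<le> M" "t \<le> M"
  shows "(\<Sum>u\<in>{..M - 1}. F u) = (\<Sum>w\<in>{..M} - {t}. F (collapse t w))"
  by (rule sum.reindex_bij_witness[where j="\<lambda>u. if u < t then u else Suc u" and i="collapse t"])
     (use assms in \<open>auto simp: collapse_def split: if_splits\<close>)

lemma sum_index_pairs_collapse:
  assumes "1 \<le> M" "w \<le> M"
  shows "(\<Sum>(u, v)\<in>index_pairs (M - 1). G u v)
       = (\<Sum>(s, t)\<in>pairs_avoiding M w. G (collapse w s) (collapse w t))"
  by (rule sum.reindex_bij_witness[where i="\<lambda>(s, t). (collapse w s, collapse w t)"
        and j="\<lambda>(u, v). (if u < w then u else Suc u, if v < w then v else Suc v)"])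
     (use assms in \<open>auto simp: index_pairs_def collapse_def split: if_splits\<close>)

lemma sum_index_pairs_after:
  "(\<Sum>(s, t)\<in>index_pairs M. \<Sum>q\<in>{t<..M}. H s t q) = (\<Sum>(a, b, c)\<in>index_triples M. H a b c)"
proof -
  have "(\<Sum>(s, t)\<in>index_pairs M. \<Sum>q\<in>{t<..M}. H s t q)
      = (\<Sum>(p, q)\<in>(SIGMA p:index_pairs M. {snd p<..M}). H (fst p) (snd p) q)"
    by (subst sum.Sigma[symmetric]) (auto simp: case_prod_beta)
  also have "\<dots> = (\<Sum>(a, b, c)\<in>index_triples M. H a b c)"
    by (rule sum.reindex_bij_witness[where i="\<lambda>(a, b, c). ((a, b), c)" and j="\<lambda>((a, b), c). (a, b, c)"])
       (auto simp: index_pairs_def index_triples_def)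
  finally show ?thesis .
qed

lemma sum_index_pairs_between:
  "(\<Sum>(s, t)\<in>index_pairs M. \<Sum>q\<in>{s<..<t}. H s t q) = (\<Sum>(a, b, c)\<in>index_triples M. H a c b)"
proof -
  have "(\<Sum>(s, t)\<in>index_pairs M. \<Sum>q\<in>{s<..<t}. H s t q)
      = (\<Sum>(p, q)\<in>(SIGMA p:index_pairs M. {fst p<..<snd p}). H (fst p) (snd p) q)"
    by (subst sum.Sigma[symmetric]) (auto simp: case_prod_beta)
  also have "\<dots> = (\<Sum>(a, b, c)\<in>index_triples M. H a c b)"
    by (rule sum.reindex_bij_witness[where i="\<lambda>(a, b, c). ((a, c), b)" and j="\<lambda>((a, c), b). (a, b, c)"])
       (auto simp: index_pairs_def index_triples_def)
  finally show ?thesis .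
qed

lemma sum_index_pairs_before:
  "(\<Sum>(s, t)\<in>index_pairs M. \<Sum>p<s. H s t p) = (\<Sum>(a, b, c)\<in>index_triples M. H b c a)"
proof -
  have "(\<Sum>(s, t)\<in>index_pairs M. \<Sum>p<s. H s t p)
      = (\<Sum>(p, q)\<in>(SIGMA p:index_pairs M. {..<fst p}). H (fst p) (snd p) q)"
    by (subst sum.Sigma[symmetric]) (auto simp: case_prod_beta)
  also have "\<dots> = (\<Sum>(a, b, c)\<in>index_triples M. H b c a)"
    by (rule sum.reindex_bij_witness[where i="\<lambda>(a, b, c). ((b, c), a)" and j="\<lambda>((b, c), a). (a, b, c)"])
       (auto simp: index_pairs_def index_triples_def)
  finally show ?thesis .
qed

lemma sum_atMost_avoiding_swap:
  "(\<Sum>w\<in>{..M}. \<Sum>(s, t)\<in>pairs_avoiding M w. G w s t)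
   = (\<Sum>(s, t)\<in>index_pairs M. \<Sum>w\<in>{..M} - {s, t}. G w s t)"
proof -
  have "(\<Sum>w\<in>{..M}. \<Sum>(s, t)\<in>pairs_avoiding M w. G w s t)
      = (\<Sum>(w, p)\<in>(SIGMA w:{..M}. pairs_avoiding M w). G w (fst p) (snd p))"
    by (subst sum.Sigma[symmetric]) (auto simp: case_prod_beta)
  also have "\<dots> = (\<Sum>(p, w)\<in>(SIGMA p:index_pairs M. {..M} - {fst p, snd p}). G w (fst p) (snd p))"
    by (rule sum.reindex_bij_witness[where i="\<lambda>(a, b). (b, a)" and j="\<lambda>(a, b). (b, a)"])
       (auto simp: index_pairs_def)
  also have "\<dots> = (\<Sum>(s, t)\<in>index_pairs M. \<Sum>w\<in>{..M} - {s, t}. G w s t)"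
    by (subst sum.Sigma[symmetric]) (auto simp: case_prod_beta)
  finally show ?thesis .
qed

lemma sum_disjoint_pairs_eq_neg:
  fixes G :: "nat \<Rightarrow> nat \<Rightarrow> nat \<Rightarrow> nat \<Rightarrow> 'b::ab_group_add"
  assumes "\<And>s t p q. (s, t) \<in> index_pairs M \<Longrightarrow> (p, q) \<in> index_pairs M \<Longrightarrow>
      p \<noteq> s \<Longrightarrow> p \<noteq> t \<Longrightarrow> q \<noteq> s \<Longrightarrow> q \<noteq> t \<Longrightarrow> G s t p q = - G p q s t"
  defines "X \<equiv> \<Sum>(s, t)\<in>index_pairs M. \<Sum>(p, q)\<in>pairs_avoiding_both M s t. G s t p q"
  shows "X = - X"
proof -
  let ?D = "SIGMA st:index_pairs M. pairs_avoiding_both M (fst st) (snd st)"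
  have X: "X = (\<Sum>(st, pq)\<in>?D. G (fst st) (snd st) (fst pq) (snd pq))"
    unfolding X_def by (subst sum.Sigma[symmetric]) (auto simp: case_prod_beta)
  have "(\<Sum>(st, pq)\<in>?D. G (fst st) (snd st) (fst pq) (snd pq))
      = (\<Sum>(st, pq)\<in>?D. - G (fst st) (snd st) (fst pq) (snd pq))"
    by (rule sum.reindex_bij_witness[where i="\<lambda>(a, b). (b, a)" and j="\<lambda>(a, b). (b, a)"])
       (auto simp: index_pairs_def intro!: assms(1)[THEN sym])
  then have "(\<Sum>(st, pq)\<in>?D. G (fst st) (snd st) (fst pq) (snd pq))
      = - (\<Sum>(st, pq)\<in>?D. G (fst st) (snd st) (fst pq) (snd pq))"
    by (simp add: sum_negf case_prod_beta)
  then show ?thesis unfolding X .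
qed

lemma sum_index_pairs_avoiding_split:
  fixes G :: "nat \<Rightarrow> nat \<Rightarrow> 'b::comm_monoid_add"
  assumes "s < t" "t \<le> M"
  shows "(\<Sum>(p, q)\<in>pairs_avoiding M t. G p q)
   = (\<Sum>(p, q)\<in>pairs_avoiding_both M s t. G p q)
     + ((\<Sum>q\<in>{s<..<t}. G s q) + (\<Sum>q\<in>{t<..M}. G s q) + (\<Sum>p<s. G p s))"
proof -
  let ?D = "pairs_avoiding_both M s t"
  let ?A = "(\<lambda>q. (s, q)) ` {s<..<t}" and ?B = "(\<lambda>q. (s, q)) ` {t<..M}"
    and ?C = "(\<lambda>p. (p, s)) ` {..<s}"
  have split: "pairs_avoiding M t = ?D \<union> (?A \<union> ?B \<union> ?C)"
    using assms by (auto simp: index_pairs_def image_iff)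
  have "(\<Sum>(p, q)\<in>?D \<union> (?A \<union> ?B \<union> ?C). G p q)
      = (\<Sum>(p, q)\<in>?D. G p q) + (\<Sum>(p, q)\<in>?A \<union> ?B \<union> ?C. G p q)"
    by (rule sum.union_disjoint) auto
  also have "(\<Sum>(p, q)\<in>?A \<union> ?B \<union> ?C. G p q)
      = (\<Sum>(p, q)\<in>?A \<union> ?B. G p q) + (\<Sum>(p, q)\<in>?C. G p q)"
    by (rule sum.union_disjoint) auto
  also have "(\<Sum>(p, q)\<in>?A \<union> ?B. G p q) = (\<Sum>(p, q)\<in>?A. G p q) + (\<Sum>(p, q)\<in>?B. G p q)"
    by (rule sum.union_disjoint) auto
  also have "(\<Sum>(p, q)\<in>?A. G p q) = (\<Sum>q\<in>{s<..<t}. G s q)"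
    by (subst sum.reindex) (auto simp: inj_on_def)
  also have "(\<Sum>(p, q)\<in>?B. G p q) = (\<Sum>q\<in>{t<..M}. G s q)"
    by (subst sum.reindex) (auto simp: inj_on_def)
  also have "(\<Sum>(p, q)\<in>?C. G p q) = (\<Sum>p<s. G p s)"
    by (subst sum.reindex) (auto simp: inj_on_def)
  finally show ?thesis unfolding split .
qed

lemma sum_atMost_remove_split:
  fixes G :: "nat \<Rightarrow> 'b::comm_monoid_add"
  assumes "s \<le> M"
  shows "(\<Sum>w\<in>{..M} - {s}. G w) = (\<Sum>w<s. G w) + (\<Sum>w\<in>{s<..M}. G w)"
proof -
  have split: "{..M} - {s} = {..<s} \<union> {s<..M}" using assms by auto
  show ?thesis unfolding split by (rule sum.union_disjoint) auto
qed

lemma sum_atMost_remove_insert: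
  fixes G :: "nat \<Rightarrow> 'b::comm_monoid_add"
  assumes "s < t" "t \<le> M"
  shows "(\<Sum>w\<in>{..M} - {t}. G w) = G s + (\<Sum>w\<in>{..M} - {s, t}. G w)"
proof -
  have split: "{..M} - {t} = insert s ({..M} - {s, t})" using assms by auto
  show ?thesis unfolding split by (rule sum.insert) auto
qed

lemma sum_greaterThanLessThan_prefix_sum:
  fixes e :: "nat \<Rightarrow> 'g::ab_group_add"
  assumes "u < v"
  shows "(\<Sum>k\<in>{u<..<v}. e k) = prefix_sum e v - prefix_sum e (Suc u)"
proof -
  have split: "{..<v} = {..<Suc u} \<union> {u<..<v}" using assms by auto
  have "prefix_sum e v = prefix_sum e (Suc u) + (\<Sum>k\<in>{u<..<v}. e k)"
    unfolding prefix_sum_def split by (rule sum.union_disjoint) auto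
  then show ?thesis by simp
qed

definition bracket_degrees :: "nat \<Rightarrow> nat \<Rightarrow> (nat \<Rightarrow> 'g::plus) \<Rightarrow> nat \<Rightarrow> 'g" where
  "bracket_degrees s t e =
     (\<lambda>k. if k < s then e k else if k = s then e s + e t else if k < t then e k else e (Suc k))"

lemma omit_arg_less: "k < w \<Longrightarrow> omit_arg w e k = e k"
  and omit_arg_ge: "w \<le> k \<Longrightarrow> omit_arg w e k = e (Suc k)"
  unfolding omit_arg_def by auto

lemma bracket_degrees_less: "k < s \<Longrightarrow> bracket_degrees s t e k = e k"
  and bracket_degrees_eq: "bracket_degrees s t e s = e s + e t"
  and bracket_degrees_between: "s < k \<Longrightarrow> k < t \<Longrightarrow> bracket_degrees s t e k = e k"
  and bracket_degrees_ge: "s < t \<Longrightarrow> t \<le> k \<Longrightarrow> bracket_degrees s t e k = e (Suc k)"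
  unfolding bracket_degrees_def by auto

lemma prefix_sum_0 [simp]: "prefix_sum e 0 = 0"
  and prefix_sum_Suc: "prefix_sum e (Suc k) = prefix_sum e k + e k"
  unfolding prefix_sum_def by simp_all

lemma prefix_sum_omit_arg:
  fixes e :: "nat \<Rightarrow> 'g::ab_group_add"
  shows "prefix_sum (omit_arg w e) u = (if u \<le> w then prefix_sum e u else prefix_sum e (Suc u) - e w)"
proof (induct u)
  case (Suc u)
  then show ?case by (cases "u = w") (auto simp: prefix_sum_Suc omit_arg_def algebra_simps)
qed simp

lemma prefix_sum_omit_arg_le: "u \<le> w \<Longrightarrow> prefix_sum (omit_arg w e) u = prefix_sum e u"
  and prefix_sum_omit_arg_ge: "w \<le> u \<Longrightarrow> prefix_sum (omit_arg w e) u = prefix_sum e (Suc u) - e w"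
  for e :: "nat \<Rightarrow> 'g::ab_group_add"
  using prefix_sum_omit_arg[of w e u] by (auto simp: le_Suc_eq prefix_sum_Suc)

lemma prefix_sum_bracket_degrees:
  fixes e :: "nat \<Rightarrow> 'g::ab_group_add"
  assumes "s < t"
  shows "prefix_sum (bracket_degrees s t e) u =
    (if u \<le> s then prefix_sum e u else if u \<le> t then prefix_sum e u + e t else prefix_sum e (Suc u))"
proof (induct u)
  case (Suc u)
  then show ?case
    using assms by (cases "u = t"; cases "u = s") (auto simp: prefix_sum_Suc bracket_degrees_def algebra_simps)
qed simp

lemma prefix_sum_bracket_degrees_le:
    "s < t \<Longrightarrow> u \<le> s \<Longrightarrow> prefix_sum (bracket_degrees s t e) u = prefix_sum e u"
  and prefix_sum_bracket_degrees_between: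
    "s < t \<Longrightarrow> s < u \<Longrightarrow> u \<le> t \<Longrightarrow> prefix_sum (bracket_degrees s t e) u = prefix_sum e u + e t"
  and prefix_sum_bracket_degrees_ge:
    "s < t \<Longrightarrow> t \<le> u \<Longrightarrow> prefix_sum (bracket_degrees s t e) u = prefix_sum e (Suc u)"
  for e :: "nat \<Rightarrow> 'g::ab_group_add"
  using prefix_sum_bracket_degrees[of s t e u] by (auto simp: add.commute prefix_sum_Suc)

lemma minus_one_power_pred: "0 < q \<Longrightarrow> (-1 :: 'k::ring_1) ^ (q - Suc 0) = - ((-1) ^ q)"
  by (cases q) auto

lemmas arg_values = omit_arg_less omit_arg_ge bracket_degrees_less bracket_degrees_eq
  bracket_degrees_between bracket_degrees_ge

lemma bracket_args_twice_triple:
  fixes br :: "'a::zero \<Rightarrow> 'a \<Rightarrow> 'a" and alpha :: "'a \<Rightarrow> 'a" and x :: "nat \<Rightarrow> 'a"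
  assumes "a < b" "b < c"
  defines "Z \<equiv> \<lambda>k. if k < a then alpha (alpha (x k)) else if k = a then 0
     else if k < b then alpha (alpha (x k)) else if Suc k < c then alpha (alpha (x (Suc k)))
     else alpha (alpha (x (Suc (Suc k))))"
  shows "bracket_args br alpha a (c - 1) (bracket_args br alpha a b x)
           = Z(a := br (br (x a) (x b)) (alpha (x c)))"
    and "bracket_args br alpha a b (bracket_args br alpha a c x)
           = Z(a := br (br (x a) (x c)) (alpha (x b)))"
    and "bracket_args br alpha a b (bracket_args br alpha b c x)
           = Z(a := br (alpha (x a)) (br (x b) (x c)))"
  using assms unfolding bracket_args_def by (auto intro!: ext)

locale color_hom_lie_module =
  fixes sA :: "'k::field_char_0 \<Rightarrow> 'a::ab_group_add \<Rightarrow> 'a"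
    and GA :: "'g::ab_group_add \<Rightarrow> 'a set"
    and br :: "'a \<Rightarrow> 'a \<Rightarrow> 'a"
    and eps :: "'g \<Rightarrow> 'g \<Rightarrow> 'k"
    and alpha :: "'a \<Rightarrow> 'a"
    and sM :: "'k \<Rightarrow> 'm::ab_group_add \<Rightarrow> 'm"
    and GM :: "'g \<Rightarrow> 'm set"
    and act :: "'a \<Rightarrow> 'm \<Rightarrow> 'm"
    and beta :: "'m \<Rightarrow> 'm"
  assumes lie_algebra: "color_hom_lie_algebra sA GA br eps alpha"
    and multiplicative: "multiplicative br alpha"
    and module: "hom_lie_module sA GA br eps alpha sM GM act beta"
begin

lemma vector_space_A: "vector_space sA"
  using lie_algebra unfolding color_hom_lie_algebra_def graded_space_def by auto

sublocale M: vector_space sM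
  using module unfolding hom_lie_module_def graded_space_def by auto

lemma eps_add_left: "eps (a + b) c = eps a c * eps b c"
  and eps_add_right: "eps a (b + c) = eps a b * eps a c"
  and eps_mult_swap: "eps a b * eps b a = 1"
  and eps_nonzero [simp]: "eps a b \<noteq> 0"
  using lie_algebra unfolding color_hom_lie_algebra_def skew_bicharacter_def by auto

lemma eps_zero_left [simp]: "eps 0 c = 1"
proof -
  have "eps 0 c = eps 0 c * eps 0 c" using eps_add_left[of 0 0 c] by simp
  then show ?thesis using eps_nonzero[of 0 c] by (metis mult_cancel_left1)
qed

lemma eps_diff_left: "eps (a - b) c = eps a c / eps b c"
proof -
  have "eps b c * eps (- b) c = 1" using eps_add_left[of b "- b" c] by simp
  then show ?thesis using eps_add_left[of a "- b" c] by (simp add: field_simps)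
qed

lemma eps_mult_swap_cancel: "eps a b * (eps b a * c) = c"
  by (simp add: mult.assoc[symmetric] eps_mult_swap)

lemma alpha_graded: "x \<in> GA g \<Longrightarrow> alpha x \<in> GA g"
  using lie_algebra unfolding color_hom_lie_algebra_def even_linear_def by auto

lemma alpha_pow_graded: "x \<in> GA g \<Longrightarrow> (alpha ^^ j) x \<in> GA g"
  by (induct j) (auto intro: alpha_graded)

lemma alpha_zero [simp]: "alpha 0 = 0"
proof -
  have "Vector_Spaces.linear sA sA alpha"
    using lie_algebra unfolding color_hom_lie_algebra_def even_linear_def by blast
  then have "alpha (0 + 0) = alpha 0 + alpha 0" unfolding linear_iff by blast
  then show ?thesis by simp
qed

lemma alpha_pow_zero [simp]: "(alpha ^^ j) 0 = 0"
  by (induct j) auto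

lemma alpha_bracket: "alpha (br x y) = br (alpha x) (alpha y)"
  using multiplicative unfolding multiplicative_def by auto

lemma alpha_pow_bracket: "(alpha ^^ j) (br x y) = br ((alpha ^^ j) x) ((alpha ^^ j) y)"
  by (induct j) (auto simp: alpha_bracket)

lemma bracket_add_right: "br x (y + z) = br x y + br x z"
  and bracket_scale_right: "br x (sA c y) = sA c (br x y)"
  using lie_algebra unfolding color_hom_lie_algebra_def linear_iff by auto

lemma bracket_add_left: "br (y + z) x = br y x + br z x"
  using lie_algebra unfolding color_hom_lie_algebra_def linear_iff by auto

lemma bracket_zero [simp]: "br x 0 = 0" "br 0 x = 0"
  using bracket_add_right[of x 0 0] bracket_add_left[of 0 0 x] by simp_all

lemma bracket_minus_right: "br x (- y) = - br x y"
proof -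
  have "br x (- y) + br x y = 0" by (metis bracket_add_right bracket_zero(1) add.left_inverse)
  then show ?thesis by (simp add: eq_neg_iff_add_eq_0)
qed

lemma bracket_graded: "x \<in> GA a \<Longrightarrow> y \<in> GA b \<Longrightarrow> br x y \<in> GA (a + b)"
  using lie_algebra unfolding color_hom_lie_algebra_def by blast

lemma bracket_skew: "x \<in> GA a \<Longrightarrow> y \<in> GA b \<Longrightarrow> br x y = - sA (eps a b) (br y x)"
  using lie_algebra unfolding color_hom_lie_algebra_def by blast

lemma bracket_skew_nested:
  assumes "u \<in> GA a" "v \<in> GA b" "w \<in> GA c"
  shows "br (br u w) (alpha v) = sA (eps (a + c) b * eps a c) (br (alpha v) (br w u))"
proof -
  interpret A: vector_space sA by (rule vector_space_A)
  have "br (br u w) (alpha v) = - sA (eps (a + c) b) (br (alpha v) (br u w))"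
    using assms by (intro bracket_skew bracket_graded alpha_graded)
  also have "br (alpha v) (br u w) = - sA (eps a c) (br (alpha v) (br w u))"
    unfolding bracket_skew[OF assms(1,3)] bracket_minus_right bracket_scale_right ..
  finally show ?thesis by simp
qed

lemma hom_jacobi:
  assumes "x \<in> GA a" "y \<in> GA b" "z \<in> GA c"
  shows "sA (eps c a) (br (alpha x) (br y z)) + sA (eps a b) (br (alpha y) (br z x))
       + sA (eps b c) (br (alpha z) (br x y)) = 0"
  using lie_algebra assms unfolding color_hom_lie_algebra_def by blast

lemma action_add_right: "act x (m + m') = act x m + act x m'"
  and action_scale_right: "act x (sM c m) = sM c (act x m)"
  using module unfolding hom_lie_module_def linear_iff by auto

lemma action_add_left: "act (x + y) m = act x m + act y m"
  using module unfolding hom_lie_module_def linear_iff by auto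

lemma action_zero [simp]: "act x 0 = 0" "act 0 m = 0"
  using action_add_right[of x 0 0] action_add_left[of 0 0 m] by simp_all

lemma action_sum: "act x (sum g A) = (\<Sum>i\<in>A. act x (g i))"
  by (induct A rule: infinite_finite_induct) (auto simp: action_add_right)

lemma action_bracket:
  "x \<in> GA a \<Longrightarrow> y \<in> GA b \<Longrightarrow>
    act (br x y) (beta m) = act (alpha x) (act y m) - sM (eps a b) (act (alpha y) (act x m))"
  using module unfolding hom_lie_module_def by blast

lemma graded_unique_degree:
  assumes "x \<in> GA a" "x \<in> GA b" "x \<noteq> 0"
  shows "a = b"
proof (rule ccontr)
  assume "a \<noteq> b"
  have neg: "- x \<in> GA b"
  proof -
    have "\<forall>c. \<forall>x\<in>GA b. sA c x \<in> GA b"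
      using lie_algebra unfolding color_hom_lie_algebra_def graded_space_def by simp
    then have "sA (-1) x \<in> GA b" using assms(2) by blast
    moreover have "sA (-1) x = - x"
      using vector_space_A unfolding module_iff_vector_space[symmetric]
      by (metis module.scale_minus_left module.scale_one)
    ultimately show ?thesis by simp
  qed
  define c where "c = (\<lambda>g. if g = a then x else if g = b then - x else 0)"
  have "0 \<in> GA g" for g
    using lie_algebra unfolding color_hom_lie_algebra_def graded_space_def by simp
  then have c_graded: "\<forall>g. c g \<in> GA g" using assms(1) neg unfolding c_def by auto
  have sum_zero: "(\<Sum>g\<in>{a, b}. c g) = 0" using \<open>a \<noteq> b\<close> unfolding c_def by simp
  have "\<forall>c S. finite S \<and> (\<forall>g. c g \<in> GA g) \<and> (\<Sum>g\<in>S. c g) = 0 \<longrightarrow> (\<forall>g\<in>S. c g = 0)"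
    using lie_algebra unfolding color_hom_lie_algebra_def graded_space_def by (elim conjE) assumption
  then have "c a = 0" using c_graded sum_zero by (metis finite.emptyI finite.insertI insertI1)
  then show False using assms(3) unfolding c_def by simp
qed

lemma deg_eqI: "x \<in> GA a \<Longrightarrow> x \<noteq> 0 \<Longrightarrow> deg GA x = a"
  unfolding deg_def by (rule some_equality) (auto intro: graded_unique_degree)

lemma eq_neg_self_imp_zero:
  fixes m :: 'm
  assumes "m = - m"
  shows "m = 0"
proof -
  have "sM 2 m = sM (1 + 1) m" by simp
  also have "\<dots> = m + m" by (simp only: M.scale_left_distrib M.scale_one)
  also have "\<dots> = 0" using assms by (metis add.right_inverse)
  finally show ?thesis by simp
qed

section \<open>The coboundary with prescribed degrees\<close>

abbreviation bargs :: "nat \<Rightarrow> nat \<Rightarrow> (nat \<Rightarrow> 'a) \<Rightarrow> nat \<Rightarrow> 'a" where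
  "bargs \<equiv> bracket_args br alpha"

definition coef_bracket :: "(nat \<Rightarrow> 'g) \<Rightarrow> nat \<Rightarrow> nat \<Rightarrow> 'k" where
  "coef_bracket e s t = (-1) ^ t * eps (\<Sum>k\<in>{s<..<t}. e k) (e t)"

definition coef_action :: "'g \<Rightarrow> (nat \<Rightarrow> 'g) \<Rightarrow> nat \<Rightarrow> 'k" where
  "coef_action \<gamma> e s = (-1) ^ s * eps (\<gamma> + prefix_sum e s) (e s)"

lemma coef_bracket_eq:
  "u < v \<Longrightarrow> coef_bracket e u v = (-1) ^ v * eps (prefix_sum e v - prefix_sum e (Suc u)) (e v)"
  unfolding coef_bracket_def by (simp add: sum_greaterThanLessThan_prefix_sum)

text \<open>The degree deg GA 0 is an arbitrary choice, so the coboundary is evaluated with a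
  prescribed degree sequence e instead; when an argument is zero, every term vanishes anyway.\<close>
definition coboundary_wrt ::
  "nat \<Rightarrow> nat \<Rightarrow> 'g \<Rightarrow> (nat \<Rightarrow> 'g) \<Rightarrow> ((nat \<Rightarrow> 'a) \<Rightarrow> 'm) \<Rightarrow> (nat \<Rightarrow> 'a) \<Rightarrow> 'm" where
  "coboundary_wrt r m \<gamma> e F y =
     (\<Sum>(s, t)\<in>index_pairs m. sM (coef_bracket e s t) (F (bargs s t y)))
   + (\<Sum>s\<in>{..m}. sM (coef_action \<gamma> e s) (act ((alpha ^^ (r + m - 1)) (y s)) (F (omit_arg s y))))"

definition vanishes_on_zero :: "nat \<Rightarrow> ((nat \<Rightarrow> 'a) \<Rightarrow> 'm) \<Rightarrow> bool" where
  "vanishes_on_zero m F \<longleftrightarrow> (\<forall>y k. k < m \<longrightarrow> y k = 0 \<longrightarrow> F y = 0)"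

lemma coboundary_eq_wrt_deg:
  "coboundary GA br eps alpha sM act r m \<gamma> F y = coboundary_wrt r m \<gamma> (\<lambda>k. deg GA (y k)) F y"
  unfolding coboundary_def coboundary_wrt_def coef_bracket_def coef_action_def prefix_sum_def
    sum_index_pairs_lessThan
  by simp

lemma multilinear_vanishes_on_zero:
  assumes "\<forall>i<m. \<forall>y. Vector_Spaces.linear sA sM (\<lambda>v. F (y(i := v)))"
  shows "vanishes_on_zero m F"
  unfolding vanishes_on_zero_def
proof (intro allI impI)
  fix y :: "nat \<Rightarrow> 'a" and k
  assume k: "k < m" "y k = 0"
  interpret A: vector_space sA by (rule vector_space_A)
  have "F (y(k := sA 0 0)) = sM 0 (F (y(k := 0)))"
    using assms k unfolding linear_iff by blast
  moreover have "y(k := sA 0 0) = y" using k by auto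
  ultimately show "F y = 0" by simp
qed

lemma coboundary_wrt_zero_arg:
  assumes F: "vanishes_on_zero m F" and k: "k \<le> m" "y k = 0"
  shows "coboundary_wrt r m \<gamma> e F y = 0"
proof -
  have "F (bargs s t y) = 0" if "s < t" "t \<le> m" for s t
  proof -
    define j where "j = (if k < s then k else if k = s \<or> k = t then s else if k < t then k else k - 1)"
    have "j < m" using that k unfolding j_def by auto
    moreover have "bargs s t y j = 0"
      using that k unfolding j_def bracket_args_def by (auto split: if_splits)
    ultimately show ?thesis using F unfolding vanishes_on_zero_def by blast
  qed
  moreover have "act ((alpha ^^ (r + m - 1)) (y s)) (F (omit_arg s y)) = 0" if "s \<le> m" for s
  proof (cases "k = s")
    case True
    then show ?thesis using k by simp
  next
    case False
    define j where "j = (if k < s then k else k - 1)"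
    have "j < m" using that k False unfolding j_def by auto
    moreover have "omit_arg s y j = 0"
      using that k False unfolding j_def omit_arg_def by (auto split: if_splits)
    ultimately show ?thesis using F unfolding vanishes_on_zero_def by auto
  qed
  ultimately show ?thesis unfolding coboundary_wrt_def index_pairs_def by (auto intro!: sum.neutral)
qed

lemma coboundary_wrt_cong:
  assumes "\<forall>k\<le>m. e k = e' k"
  shows "coboundary_wrt r m \<gamma> e F y = coboundary_wrt r m \<gamma> e' F y"
proof -
  have "(\<Sum>k\<in>{s<..<t}. e k) = (\<Sum>k\<in>{s<..<t}. e' k)" if "t \<le> m" for s t
    using assms that by (intro sum.cong) auto
  moreover have "prefix_sum e s = prefix_sum e' s" if "s \<le> m" for s
    using assms that unfolding prefix_sum_def by (intro sum.cong) auto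
  ultimately show ?thesis
    using assms unfolding coboundary_wrt_def coef_bracket_def coef_action_def
    by (intro arg_cong2[where f="(+)"] sum.cong refl) (auto simp: index_pairs_def)
qed

lemma coboundary_eq_wrt:
  assumes "vanishes_on_zero m F" and "\<forall>k\<le>m. y k \<in> GA (e k)"
  shows "coboundary GA br eps alpha sM act r m \<gamma> F y = coboundary_wrt r m \<gamma> e F y"
proof (cases "\<exists>k\<le>m. y k = 0")
  case True
  then show ?thesis
    unfolding coboundary_eq_wrt_deg using coboundary_wrt_zero_arg[OF assms(1)] by metis
next
  case False
  then have "\<forall>k\<le>m. deg GA (y k) = e k" using assms(2) deg_eqI by auto
  then show ?thesis unfolding coboundary_eq_wrt_deg by (rule coboundary_wrt_cong)
qed

lemma vanishes_on_zero_coboundary: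
  assumes "vanishes_on_zero m F"
  shows "vanishes_on_zero (Suc m) (coboundary GA br eps alpha sM act r m \<gamma> F)"
  unfolding vanishes_on_zero_def coboundary_eq_wrt_deg
  using coboundary_wrt_zero_arg[OF assms] by (metis less_Suc_eq_le)

end

section \<open>Cancellation in the double coboundary\<close>

locale double_coboundary = color_hom_lie_module sA GA br eps alpha sM GM act beta
  for sA :: "'k::field_char_0 \<Rightarrow> 'a::ab_group_add \<Rightarrow> 'a"
    and GA :: "'g::ab_group_add \<Rightarrow> 'a set"
    and br :: "'a \<Rightarrow> 'a \<Rightarrow> 'a"
    and eps :: "'g \<Rightarrow> 'g \<Rightarrow> 'k"
    and alpha :: "'a \<Rightarrow> 'a"
    and sM :: "'k \<Rightarrow> 'm::ab_group_add \<Rightarrow> 'm"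
    and GM :: "'g \<Rightarrow> 'm set"
    and act :: "'a \<Rightarrow> 'm \<Rightarrow> 'm"
    and beta :: "'m \<Rightarrow> 'm" +
  fixes N r :: nat and \<gamma> :: 'g and f :: "(nat \<Rightarrow> 'a) \<Rightarrow> 'm"
    and x :: "nat \<Rightarrow> 'a" and d :: "nat \<Rightarrow> 'g"
  assumes N_ge_2: "2 \<le> N"
    and f_linear: "\<forall>i<N - 1. \<forall>y. Vector_Spaces.linear sA sM (\<lambda>v. f (y(i := v)))"
    and f_compatible: "alpha_beta_compatible alpha beta f"
    and x_graded: "\<forall>k\<le>N. x k \<in> GA (d k)"
begin

definition pow_inner :: "'a \<Rightarrow> 'a" where
  "pow_inner = alpha ^^ (r + N - 2)"

definition pow_outer :: "'a \<Rightarrow> 'a" where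
  "pow_outer = alpha ^^ (r + N - 1)"

lemma pow_outer_eq: "pow_outer y = alpha (pow_inner y)"
proof -
  have "r + N - 1 = Suc (r + N - 2)" using N_ge_2 by simp
  then show ?thesis unfolding pow_outer_def pow_inner_def by simp
qed

lemma pow_inner_alpha: "pow_inner (alpha y) = pow_outer y"
  unfolding pow_outer_eq pow_inner_def by (simp add: funpow_swap1)

lemma pow_inner_bracket: "pow_inner (br y z) = br (pow_inner y) (pow_inner z)"
  unfolding pow_inner_def by (rule alpha_pow_bracket)

lemma pow_inner_graded: "y \<in> GA g \<Longrightarrow> pow_inner y \<in> GA g"
  unfolding pow_inner_def by (rule alpha_pow_graded)

lemma f_alpha: "f (alpha \<circ> y) = beta (f y)"
  using f_compatible unfolding alpha_beta_compatible_def by blast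

lemma f_slot_add: "i < N - 1 \<Longrightarrow> f (y(i := u + v)) = f (y(i := u)) + f (y(i := v))"
  and f_slot_scale: "i < N - 1 \<Longrightarrow> f (y(i := sA c u)) = sM c (f (y(i := u)))"
  using f_linear unfolding linear_iff by blast+

lemma f_slot_minus: "i < N - 1 \<Longrightarrow> f (y(i := - u)) = - f (y(i := u))"
  using f_slot_add[of i y "- u" u] f_slot_add[of i y 0 0] by (simp add: eq_neg_iff_add_eq_0)

lemmas prefix_sum_d_Suc [simp] = prefix_sum_Suc[of d]

lemmas coef_simps = coef_action_def coef_bracket_eq prefix_sum_omit_arg_le prefix_sum_omit_arg_ge
  prefix_sum_bracket_degrees_le prefix_sum_bracket_degrees_between prefix_sum_bracket_degrees_ge
  omit_arg_less omit_arg_ge bracket_degrees_less bracket_degrees_eq bracket_degrees_between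
  bracket_degrees_ge minus_one_power_pred eps_add_left eps_add_right eps_diff_left eps_mult_swap
  eps_mult_swap_cancel collapse_def

text \<open>In the names below the first letter refers to the outer and the second to the inner step
  of the double coboundary (b: two arguments are bracketed, a: an argument acts on the module);
  the indices of the inner step are positions in the shortened argument list.\<close>

definition bb_term :: "nat \<Rightarrow> nat \<Rightarrow> nat \<Rightarrow> nat \<Rightarrow> 'm" where
  "bb_term s t u v = sM (coef_bracket d s t * coef_bracket (bracket_degrees s t d) u v)
     (f (bargs u v (bargs s t x)))"

definition ba_term :: "nat \<Rightarrow> nat \<Rightarrow> nat \<Rightarrow> 'm" where
  "ba_term s t u = sM (coef_bracket d s t * coef_action \<gamma> (bracket_degrees s t d) u)
     (act (pow_inner (bargs s t x u)) (f (omit_arg u (bargs s t x))))"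

definition ab_term :: "nat \<Rightarrow> nat \<Rightarrow> nat \<Rightarrow> 'm" where
  "ab_term w u v = sM (coef_action \<gamma> d w * coef_bracket (omit_arg w d) u v)
     (act (pow_outer (x w)) (f (bargs u v (omit_arg w x))))"

definition aa_term :: "nat \<Rightarrow> nat \<Rightarrow> 'm" where
  "aa_term s u = sM (coef_action \<gamma> d s * coef_action \<gamma> (omit_arg s d) u)
     (act (pow_outer (x s)) (act (pow_inner (omit_arg s x u)) (f (omit_arg u (omit_arg s x)))))"

lemma f_vanishes_on_zero: "vanishes_on_zero (N - 1) f"
  by (rule multilinear_vanishes_on_zero[OF f_linear])

lemma inner_coboundary_bracket_args:
  assumes "(s, t) \<in> index_pairs N"
  shows "coboundary GA br eps alpha sM act r (N - 1) \<gamma> f (bargs s t x)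
       = coboundary_wrt r (N - 1) \<gamma> (bracket_degrees s t d) f (bargs s t x)"
proof -
  have "\<forall>k\<le>N - 1. bargs s t x k \<in> GA (bracket_degrees s t d k)"
    using assms x_graded
    by (auto simp: index_pairs_def bracket_args_def bracket_degrees_def intro!: alpha_graded bracket_graded)
  then show ?thesis by (rule coboundary_eq_wrt[OF f_vanishes_on_zero])
qed

lemma inner_coboundary_omit_arg:
  assumes "s \<le> N"
  shows "coboundary GA br eps alpha sM act r (N - 1) \<gamma> f (omit_arg s x)
       = coboundary_wrt r (N - 1) \<gamma> (omit_arg s d) f (omit_arg s x)"
proof -
  have "\<forall>k\<le>N - 1. omit_arg s x k \<in> GA (omit_arg s d k)"
    using assms x_graded N_ge_2 by (auto simp: omit_arg_def)
  then show ?thesis by (rule coboundary_eq_wrt[OF f_vanishes_on_zero])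
qed

lemma coboundary_coboundary_expand:
  "coboundary GA br eps alpha sM act r N \<gamma> (coboundary GA br eps alpha sM act r (N - 1) \<gamma> f) x
   = (\<Sum>(s, t)\<in>index_pairs N. \<Sum>(u, v)\<in>index_pairs (N - 1). bb_term s t u v)
   + (\<Sum>(s, t)\<in>index_pairs N. \<Sum>u\<in>{..N - 1}. ba_term s t u)
   + ((\<Sum>w\<in>{..N}. \<Sum>(u, v)\<in>index_pairs (N - 1). ab_term w u v)
   + (\<Sum>s\<in>{..N}. \<Sum>u\<in>{..N - 1}. aa_term s u))"
proof -
  let ?g = "coboundary GA br eps alpha sM act r (N - 1) \<gamma> f"
  have "Suc (N - 1) = N" using N_ge_2 by simp
  then have g_vanishes: "vanishes_on_zero N ?g"
    using vanishes_on_zero_coboundary[OF f_vanishes_on_zero] by metis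
  have inner_power: "r + (N - 1) - 1 = r + N - 2" using N_ge_2 by simp
  have bb_ba: "(\<Sum>(s, t)\<in>index_pairs N. sM (coef_bracket d s t)
         (coboundary_wrt r (N - 1) \<gamma> (bracket_degrees s t d) f (bargs s t x)))
      = (\<Sum>(s, t)\<in>index_pairs N. \<Sum>(u, v)\<in>index_pairs (N - 1). bb_term s t u v)
      + (\<Sum>(s, t)\<in>index_pairs N. \<Sum>u\<in>{..N - 1}. ba_term s t u)"
    unfolding coboundary_wrt_def inner_power pow_inner_def[symmetric] bb_term_def ba_term_def
    by (simp add: M.scale_right_distrib M.scale_sum_right case_prod_beta sum.distrib)
  have ab_aa: "(\<Sum>s\<in>{..N}. sM (coef_action \<gamma> d s)
         (act (pow_outer (x s)) (coboundary_wrt r (N - 1) \<gamma> (omit_arg s d) f (omit_arg s x))))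
      = (\<Sum>w\<in>{..N}. \<Sum>(u, v)\<in>index_pairs (N - 1). ab_term w u v)
      + (\<Sum>s\<in>{..N}. \<Sum>u\<in>{..N - 1}. aa_term s u)"
    unfolding coboundary_wrt_def inner_power pow_inner_def[symmetric] ab_term_def aa_term_def
    by (simp add: M.scale_right_distrib M.scale_sum_right case_prod_beta sum.distrib
        action_add_right action_scale_right action_sum)
  have "coboundary GA br eps alpha sM act r N \<gamma> ?g x = coboundary_wrt r N \<gamma> d ?g x"
    by (rule coboundary_eq_wrt[OF g_vanishes x_graded])
  also have "\<dots> =
      (\<Sum>(s, t)\<in>index_pairs N. sM (coef_bracket d s t)
         (coboundary_wrt r (N - 1) \<gamma> (bracket_degrees s t d) f (bargs s t x)))
    + (\<Sum>s\<in>{..N}. sM (coef_action \<gamma> d s)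
         (act (pow_outer (x s)) (coboundary_wrt r (N - 1) \<gamma> (omit_arg s d) f (omit_arg s x))))"
    unfolding coboundary_wrt_def[of r N] pow_outer_def
    using inner_coboundary_bracket_args inner_coboundary_omit_arg
    by (intro arg_cong2[where f="(+)"] sum.cong refl) (auto simp: case_prod_beta)
  finally show ?thesis unfolding bb_ba ab_aa .
qed


lemma coef_aa_ba:
  assumes "a < b" "b \<le> N"
  shows "coef_action \<gamma> d a * coef_action \<gamma> (omit_arg a d) (b - 1)
           = - (coef_bracket d a b * coef_action \<gamma> (bracket_degrees a b d) a)"
    and "coef_action \<gamma> d b * coef_action \<gamma> (omit_arg b d) a
           = coef_bracket d a b * coef_action \<gamma> (bracket_degrees a b d) a * eps (d a) (d b)"
proof -
  obtain b' where b: "b = Suc b'" using assms by (cases b) auto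
  show "coef_action \<gamma> d a * coef_action \<gamma> (omit_arg a d) (b - 1)
      = - (coef_bracket d a b * coef_action \<gamma> (bracket_degrees a b d) a)"
    using assms unfolding b
    by (cases "b' = a") (auto simp: coef_simps field_simps)
  show "coef_action \<gamma> d b * coef_action \<gamma> (omit_arg b d) a
      = coef_bracket d a b * coef_action \<gamma> (bracket_degrees a b d) a * eps (d a) (d b)"
    using assms unfolding b
    by (auto simp: coef_simps field_simps)
qed

text \<open>Acting by x_a and x_b in either order, against acting by [x_a, x_b]: the module axiom.\<close>
lemma aa_ba_cancel:
  assumes ab: "a < b" "b \<le> N"
  shows "aa_term b a + aa_term a (b - 1) + ba_term a b a = 0"
proof -
  define Z where "Z = omit_arg a (omit_arg b x)"
  have args: "omit_arg b x a = x a" "omit_arg a x (b - 1) = x b" "bargs a b x a = br (x a) (x b)"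
    "omit_arg (b - 1) (omit_arg a x) = Z" "omit_arg a (bargs a b x) = alpha \<circ> Z"
    using ab unfolding Z_def omit_arg_def bracket_args_def by (auto intro!: ext)
  have xa: "pow_inner (x a) \<in> GA (d a)" and xb: "pow_inner (x b) \<in> GA (d b)"
    using x_graded ab by (auto intro!: pow_inner_graded)
  define m_ab where "m_ab = act (alpha (pow_inner (x a))) (act (pow_inner (x b)) (f Z))"
  define m_ba where "m_ba = act (alpha (pow_inner (x b))) (act (pow_inner (x a)) (f Z))"
  have "aa_term b a = sM (coef_action \<gamma> d b * coef_action \<gamma> (omit_arg b d) a) m_ba"
    unfolding aa_term_def m_ba_def args(1) Z_def pow_outer_eq ..
  moreover have "aa_term a (b - 1) = sM (coef_action \<gamma> d a * coef_action \<gamma> (omit_arg a d) (b - 1)) m_ab"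
    unfolding aa_term_def m_ab_def args(2,4) pow_outer_eq ..
  moreover have "ba_term a b a = sM (coef_bracket d a b * coef_action \<gamma> (bracket_degrees a b d) a)
      (m_ab - sM (eps (d a) (d b)) m_ba)"
    unfolding ba_term_def args(3,5) pow_inner_bracket m_ab_def m_ba_def
    using action_bracket[OF xa xb] f_alpha by simp
  ultimately show ?thesis
    unfolding coef_aa_ba[OF ab] by (simp add: M.scale_right_diff_distrib M.scale_left_distrib)
qed

lemma coef_ba_ab:
  assumes "s < t" "t \<le> N" "w \<le> N" "w \<noteq> s" "w \<noteq> t"
  shows "coef_bracket d s t * coef_action \<gamma> (bracket_degrees s t d) (collapse t w)
       = - (coef_action \<gamma> d w * coef_bracket (omit_arg w d) (collapse w s) (collapse w t))"
proof -
  consider "w < s" | "s < w" "w < t" | "t < w" using assms by linarith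
  then show ?thesis
  proof cases
    case 1
    obtain s' where s: "s = Suc s'" using 1 by (cases s) auto
    obtain t' where t: "t = Suc t'" using assms by (cases t) auto
    show ?thesis using assms 1 unfolding s t
      by (cases "s' = w") (auto simp: coef_simps field_simps)
  next
    case 2
    obtain t' where t: "t = Suc t'" using assms by (cases t) auto
    show ?thesis using assms 2 unfolding t
      by (cases "t' = w") (auto simp: coef_simps field_simps)
  next
    case 3
    obtain w' where w: "w = Suc w'" using 3 by (cases w) auto
    show ?thesis using assms 3 unfolding w
      by (cases "w' = t") (auto simp: coef_simps field_simps)
  qed
qed

lemma ba_ab_cancel:
  assumes "s < t" "t \<le> N" "w \<le> N" "w \<noteq> s" "w \<noteq> t"
  shows "ba_term s t (collapse t w) + ab_term w (collapse w s) (collapse w t) = 0"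
proof -
  have args: "bargs s t x (collapse t w) = alpha (x w)"
    "omit_arg (collapse t w) (bargs s t x) = bargs (collapse w s) (collapse w t) (omit_arg w x)"
    using assms unfolding bracket_args_def collapse_def omit_arg_def by (auto intro!: ext)
  show ?thesis
    unfolding ba_term_def ab_term_def args pow_inner_alpha coef_ba_ab[OF assms]
    by (simp add: M.scale_left_distrib[symmetric])
qed

lemma coef_bb_disjoint:
  assumes "s < t" "t \<le> N" "p < q" "q \<le> N" "p \<noteq> s" "p \<noteq> t" "q \<noteq> s" "q \<noteq> t"
  shows "coef_bracket d s t * coef_bracket (bracket_degrees s t d) (collapse t p) (collapse t q)
       = - (coef_bracket d p q * coef_bracket (bracket_degrees p q d) (collapse q s) (collapse q t))"
proof -
  consider "t < p" | "s < p" "p < t" "t < q" | "s < p" "q < t" | "p < s" "t < q"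
    | "p < s" "s < q" "q < t" | "q < s" using assms by linarith
  then show ?thesis by cases (use assms in \<open>auto simp: coef_simps field_simps\<close>)
qed

lemma bargs_disjoint_swap:
  assumes "s < t" "t \<le> N" "p < q" "q \<le> N" "p \<noteq> s" "p \<noteq> t" "q \<noteq> s" "q \<noteq> t"
  shows "bargs (collapse t p) (collapse t q) (bargs s t x)
       = bargs (collapse q s) (collapse q t) (bargs p q x)"
proof
  fix k
  consider "t < p" | "s < p" "p < t" "t < q" | "s < p" "q < t" | "p < s" "t < q"
    | "p < s" "s < q" "q < t" | "q < s" using assms by linarith
  then show "bargs (collapse t p) (collapse t q) (bargs s t x) k
           = bargs (collapse q s) (collapse q t) (bargs p q x) k"
    by cases (use assms in \<open>auto simp: bracket_args_def collapse_def alpha_bracket\<close>)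
qed

lemma bb_disjoint_antisym:
  assumes "s < t" "t \<le> N" "p < q" "q \<le> N" "p \<noteq> s" "p \<noteq> t" "q \<noteq> s" "q \<noteq> t"
  shows "bb_term s t (collapse t p) (collapse t q) = - bb_term p q (collapse q s) (collapse q t)"
  unfolding bb_term_def bargs_disjoint_swap[OF assms] coef_bb_disjoint[OF assms] by simp

lemma f_slot_jacobi:
  assumes "i < N - 1" and graded: "u \<in> GA a" "v \<in> GA b" "w \<in> GA c"
  shows "sM (eps c a) (f (y(i := br (alpha u) (br v w))))
       + sM (eps a b) (f (y(i := br (alpha v) (br w u))))
       + sM (eps b c) (f (y(i := br (alpha w) (br u v)))) = 0"
proof -
  have "f (y(i := 0)) = 0" using f_slot_add[OF assms(1), of y 0 0] by simp
  then show ?thesis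
    using hom_jacobi[OF graded] assms(1) by (metis f_slot_add f_slot_scale)
qed

lemma coef_bb_jacobi:
  assumes "a < b" "b < c" "c \<le> N"
  shows "coef_bracket d a c * coef_bracket (bracket_degrees a c d) a b
           * (eps (d a + d c) (d b) * eps (d a) (d c))
         = coef_bracket d b c * coef_bracket (bracket_degrees b c d) a b * eps (d a) (d c)
           * eps (d a) (d b)"
    and "- (coef_bracket d a b * coef_bracket (bracket_degrees a b d) a (c - 1)
            * eps (d a + d b) (d c))
         = coef_bracket d b c * coef_bracket (bracket_degrees b c d) a b * eps (d a) (d c)
           * eps (d b) (d c)"
  using assms by (auto simp: coef_simps field_simps)

text \<open>The three bracket-bracket terms on x_a, x_b, x_c are, up to a common factor, f applied to
  the Hom-Jacobi identity for x_a, x_b, x_c.\<close>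
lemma bb_jacobi:
  assumes abc: "a < b" "b < c" "c \<le> N"
  shows "bb_term a b (collapse b a) (collapse b c) + bb_term a c (collapse c a) (collapse c b)
       + bb_term b c (collapse c a) (collapse c b) = 0"
proof -
  obtain Z where Z: "bargs a (c - 1) (bargs a b x) = Z(a := br (br (x a) (x b)) (alpha (x c)))"
      "bargs a b (bargs a c x) = Z(a := br (br (x a) (x c)) (alpha (x b)))"
      "bargs a b (bargs b c x) = Z(a := br (alpha (x a)) (br (x b) (x c)))"
    using bracket_args_twice_triple[OF abc(1,2)] by blast
  have collapse: "collapse b a = a" "collapse b c = c - 1" "collapse c a = a" "collapse c b = b"
    using abc by (auto simp: collapse_def)
  have slot: "a < N - 1" using abc by linarith
  have xa: "x a \<in> GA (d a)" and xb: "x b \<in> GA (d b)" and xc: "x c \<in> GA (d c)"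
    using x_graded abc by auto
  define Xa where "Xa = br (alpha (x a)) (br (x b) (x c))"
  define Xb where "Xb = br (alpha (x b)) (br (x c) (x a))"
  define Xc where "Xc = br (alpha (x c)) (br (x a) (x b))"
  have skew_ab: "br (br (x a) (x b)) (alpha (x c)) = - sA (eps (d a + d b) (d c)) Xc"
    unfolding Xc_def by (rule bracket_skew[OF bracket_graded[OF xa xb] alpha_graded[OF xc]])
  have skew_ac: "br (br (x a) (x c)) (alpha (x b)) = sA (eps (d a + d c) (d b) * eps (d a) (d c)) Xb"
    unfolding Xb_def by (rule bracket_skew_nested[OF xa xb xc])
  have terms:
    "bb_term a b (collapse b a) (collapse b c) = sM (- (coef_bracket d a b
       * coef_bracket (bracket_degrees a b d) a (c - 1) * eps (d a + d b) (d c))) (f (Z(a := Xc)))"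
    "bb_term a c (collapse c a) (collapse c b) = sM (coef_bracket d a c
       * coef_bracket (bracket_degrees a c d) a b * (eps (d a + d c) (d b) * eps (d a) (d c)))
       (f (Z(a := Xb)))"
    "bb_term b c (collapse c a) (collapse c b)
       = sM (coef_bracket d b c * coef_bracket (bracket_degrees b c d) a b) (f (Z(a := Xa)))"
    unfolding bb_term_def collapse Z skew_ab skew_ac Xa_def f_slot_minus[OF slot]
      f_slot_scale[OF slot]
    by simp_all
  define \<kappa> where "\<kappa> = coef_bracket d b c * coef_bracket (bracket_degrees b c d) a b * eps (d a) (d c)"
  have "coef_bracket d b c * coef_bracket (bracket_degrees b c d) a b = \<kappa> * eps (d c) (d a)"
    unfolding \<kappa>_def by (simp add: mult.assoc eps_mult_swap)
  then show ?thesis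
    unfolding terms coef_bb_jacobi[OF abc, folded \<kappa>_def]
    using arg_cong[OF f_slot_jacobi[OF slot xa xb xc, of Z, folded Xa_def Xb_def Xc_def], of "sM \<kappa>"]
    by (simp add: M.scale_right_distrib algebra_simps)
qed

lemma sum_aa_eq:
  "(\<Sum>s\<in>{..N}. \<Sum>u\<in>{..N - 1}. aa_term s u)
   = (\<Sum>(a, b)\<in>index_pairs N. aa_term b a + aa_term a (b - 1))"
proof -
  have "(\<Sum>s\<in>{..N}. \<Sum>u\<in>{..N - 1}. aa_term s u)
      = (\<Sum>s\<in>{..N}. \<Sum>w\<in>{..N} - {s}. aa_term s (collapse s w))"
    using N_ge_2 by (intro sum.cong refl sum_atMost_collapse) auto
  also have "\<dots> = (\<Sum>s\<in>{..N}. (\<Sum>w<s. aa_term s w) + (\<Sum>w\<in>{s<..N}. aa_term s (w - 1)))"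
  proof (intro sum.cong refl)
    fix s assume "s \<in> {..N}"
    then have "(\<Sum>w\<in>{..N} - {s}. aa_term s (collapse s w))
        = (\<Sum>w<s. aa_term s (collapse s w)) + (\<Sum>w\<in>{s<..N}. aa_term s (collapse s w))"
      by (intro sum_atMost_remove_split) auto
    also have "\<dots> = (\<Sum>w<s. aa_term s w) + (\<Sum>w\<in>{s<..N}. aa_term s (w - 1))"
      by (intro arg_cong2[where f="(+)"] sum.cong) (auto simp: collapse_def)
    finally show "(\<Sum>w\<in>{..N} - {s}. aa_term s (collapse s w))
        = (\<Sum>w<s. aa_term s w) + (\<Sum>w\<in>{s<..N}. aa_term s (w - 1))" .
  qed
  also have "\<dots> = (\<Sum>(a, b)\<in>index_pairs N. aa_term b a)
      + (\<Sum>(a, b)\<in>index_pairs N. aa_term a (b - 1))"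
    unfolding sum.distrib sum_index_pairs_lessThan sum_index_pairs_greaterThan ..
  finally show ?thesis by (simp add: sum.distrib case_prod_beta)
qed

lemma sum_ba_eq:
  "(\<Sum>(s, t)\<in>index_pairs N. \<Sum>u\<in>{..N - 1}. ba_term s t u)
   = (\<Sum>(s, t)\<in>index_pairs N. ba_term s t s)
   + (\<Sum>(s, t)\<in>index_pairs N. \<Sum>w\<in>{..N} - {s, t}. ba_term s t (collapse t w))"
proof -
  have "(\<Sum>u\<in>{..N - 1}. ba_term s t u)
      = ba_term s t s + (\<Sum>w\<in>{..N} - {s, t}. ba_term s t (collapse t w))"
    if "(s, t) \<in> index_pairs N" for s t
  proof -
    have st: "s < t" "t \<le> N" using that by (auto simp: index_pairs_def)
    have "(\<Sum>u\<in>{..N - 1}. ba_term s t u) = (\<Sum>w\<in>{..N} - {t}. ba_term s t (collapse t w))"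
      using N_ge_2 st by (intro sum_atMost_collapse) auto
    also have "\<dots> = ba_term s t (collapse t s) + (\<Sum>w\<in>{..N} - {s, t}. ba_term s t (collapse t w))"
      using st by (rule sum_atMost_remove_insert)
    finally show ?thesis using st by (simp add: collapse_def)
  qed
  then show ?thesis by (simp add: sum.distrib[symmetric] case_prod_beta cong: sum.cong)
qed

lemma sum_ab_eq:
  "(\<Sum>w\<in>{..N}. \<Sum>(u, v)\<in>index_pairs (N - 1). ab_term w u v)
   = (\<Sum>(s, t)\<in>index_pairs N. \<Sum>w\<in>{..N} - {s, t}. ab_term w (collapse w s) (collapse w t))"
proof -
  have "(\<Sum>w\<in>{..N}. \<Sum>(u, v)\<in>index_pairs (N - 1). ab_term w u v)
      = (\<Sum>w\<in>{..N}. \<Sum>(s, t)\<in>pairs_avoiding N w. ab_term w (collapse w s) (collapse w t))"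
    using N_ge_2 by (intro sum.cong refl sum_index_pairs_collapse) auto
  then show ?thesis unfolding sum_atMost_avoiding_swap .
qed

lemma sum_bb_split:
  "(\<Sum>(s, t)\<in>index_pairs N. \<Sum>(u, v)\<in>index_pairs (N - 1). bb_term s t u v)
   = (\<Sum>(s, t)\<in>index_pairs N. \<Sum>(p, q)\<in>pairs_avoiding_both N s t.
        bb_term s t (collapse t p) (collapse t q))
   + (\<Sum>(a, b, c)\<in>index_triples N. bb_term a b (collapse b a) (collapse b c)
        + bb_term a c (collapse c a) (collapse c b) + bb_term b c (collapse c a) (collapse c b))"
proof -
  have "(\<Sum>(u, v)\<in>index_pairs (N - 1). bb_term s t u v)
      = (\<Sum>(p, q)\<in>pairs_avoiding_both N s t. bb_term s t (collapse t p) (collapse t q))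
      + ((\<Sum>q\<in>{s<..<t}. bb_term s t (collapse t s) (collapse t q))
         + (\<Sum>q\<in>{t<..N}. bb_term s t (collapse t s) (collapse t q))
         + (\<Sum>p<s. bb_term s t (collapse t p) (collapse t s)))"
    if "(s, t) \<in> index_pairs N" for s t
  proof -
    have st: "s < t" "t \<le> N" using that by (auto simp: index_pairs_def)
    have "(\<Sum>(u, v)\<in>index_pairs (N - 1). bb_term s t u v)
        = (\<Sum>(p, q)\<in>pairs_avoiding N t. bb_term s t (collapse t p) (collapse t q))"
      using N_ge_2 st by (intro sum_index_pairs_collapse) auto
    then show ?thesis unfolding sum_index_pairs_avoiding_split[OF st] .
  qed
  then have "(\<Sum>(s, t)\<in>index_pairs N. \<Sum>(u, v)\<in>index_pairs (N - 1). bb_term s t u v)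
      = (\<Sum>(s, t)\<in>index_pairs N. \<Sum>(p, q)\<in>pairs_avoiding_both N s t.
           bb_term s t (collapse t p) (collapse t q))
      + ((\<Sum>(s, t)\<in>index_pairs N. \<Sum>q\<in>{s<..<t}. bb_term s t (collapse t s) (collapse t q))
         + (\<Sum>(s, t)\<in>index_pairs N. \<Sum>q\<in>{t<..N}. bb_term s t (collapse t s) (collapse t q))
         + (\<Sum>(s, t)\<in>index_pairs N. \<Sum>p<s. bb_term s t (collapse t p) (collapse t s)))"
    by (simp add: sum.distrib case_prod_beta cong: sum.cong)
  also have "\<dots> = (\<Sum>(s, t)\<in>index_pairs N. \<Sum>(p, q)\<in>pairs_avoiding_both N s t.
           bb_term s t (collapse t p) (collapse t q))
      + ((\<Sum>(a, b, c)\<in>index_triples N. bb_term a c (collapse c a) (collapse c b))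
         + (\<Sum>(a, b, c)\<in>index_triples N. bb_term a b (collapse b a) (collapse b c))
         + (\<Sum>(a, b, c)\<in>index_triples N. bb_term b c (collapse c a) (collapse c b)))"
    unfolding sum_index_pairs_between sum_index_pairs_after sum_index_pairs_before ..
  finally show ?thesis by (simp add: sum.distrib case_prod_beta algebra_simps)
qed

lemma sum_bb_eq_zero:
  "(\<Sum>(s, t)\<in>index_pairs N. \<Sum>(u, v)\<in>index_pairs (N - 1). bb_term s t u v) = 0"
proof -
  have "(\<Sum>(s, t)\<in>index_pairs N. \<Sum>(p, q)\<in>pairs_avoiding_both N s t.
      bb_term s t (collapse t p) (collapse t q)) = 0"
    by (rule eq_neg_self_imp_zero, rule sum_disjoint_pairs_eq_neg)
       (auto simp: index_pairs_def intro!: bb_disjoint_antisym)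
  moreover have "(\<Sum>(a, b, c)\<in>index_triples N. bb_term a b (collapse b a) (collapse b c)
        + bb_term a c (collapse c a) (collapse c b) + bb_term b c (collapse c a) (collapse c b)) = 0"
    by (intro sum.neutral ballI) (auto simp: index_triples_def intro!: bb_jacobi)
  ultimately show ?thesis unfolding sum_bb_split by simp
qed

theorem coboundary_coboundary_eq_zero:
  "coboundary GA br eps alpha sM act r N \<gamma> (coboundary GA br eps alpha sM act r (N - 1) \<gamma> f) x = 0"
proof -
  have "(\<Sum>s\<in>{..N}. \<Sum>u\<in>{..N - 1}. aa_term s u) + (\<Sum>(s, t)\<in>index_pairs N. ba_term s t s) = 0"
    unfolding sum_aa_eq sum.distrib[symmetric]
    by (intro sum.neutral ballI) (auto simp: index_pairs_def aa_ba_cancel[simplified One_nat_def])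
  moreover have "(\<Sum>(s, t)\<in>index_pairs N. \<Sum>w\<in>{..N} - {s, t}. ba_term s t (collapse t w))
      + (\<Sum>w\<in>{..N}. \<Sum>(u, v)\<in>index_pairs (N - 1). ab_term w u v) = 0"
    unfolding sum_ab_eq sum.distrib[symmetric]
    by (intro sum.neutral ballI)
       (auto simp: index_pairs_def sum.distrib[symmetric] intro!: sum.neutral ba_ab_cancel)
  ultimately show ?thesis
    unfolding coboundary_coboundary_expand sum_bb_eq_zero sum_ba_eq by (simp add: algebra_simps)
qed

end

theorem mainTheorem6:
  fixes sA :: "'k::field_char_0 \<Rightarrow> 'a::ab_group_add \<Rightarrow> 'a"
    and GA :: "'g::ab_group_add \<Rightarrow> 'a set"
    and br :: "'a \<Rightarrow> 'a \<Rightarrow> 'a"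
    and eps :: "'g \<Rightarrow> 'g \<Rightarrow> 'k"
    and alpha :: "'a \<Rightarrow> 'a"
    and sM :: "'k \<Rightarrow> 'm::ab_group_add \<Rightarrow> 'm"
    and GM :: "'g \<Rightarrow> 'm set"
    and act :: "'a \<Rightarrow> 'm \<Rightarrow> 'm"
    and beta :: "'m \<Rightarrow> 'm"
    and n r :: nat
    and \<gamma> :: 'g
    and f :: "(nat \<Rightarrow> 'a) \<Rightarrow> 'm"
    and x :: "nat \<Rightarrow> 'a"
  assumes "color_hom_lie_algebra sA GA br eps alpha"
    and "multiplicative br alpha"
    and "hom_lie_module sA GA br eps alpha sM GM act beta"
    and "n \<ge> 2" and "r \<ge> 1"
    and "cochain_deg sA GA eps sM GM (n - 1) \<gamma> f"
    and "alpha_beta_compatible alpha beta f"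
    and "\<forall>i\<le>n. homogeneous GA (x i)"
  shows "coboundary GA br eps alpha sM act r n \<gamma>
           (coboundary GA br eps alpha sM act r (n - 1) \<gamma> f) x = 0"
proof -
  have "\<forall>k\<le>n. x k \<in> GA (deg GA (x k))"
    using assms(8) unfolding homogeneous_def deg_def by (metis someI)
  moreover have "\<forall>i<n - 1. \<forall>y. Vector_Spaces.linear sA sM (\<lambda>v. f (y(i := v)))"
    using assms(6) unfolding cochain_deg_def by blast
  ultimately interpret double_coboundary sA GA br eps alpha sM GM act beta n r \<gamma> f x "\<lambda>k. deg GA (x k)"
    using assms(1-4,7) by unfold_locales auto
  show ?thesis by (rule coboundary_coboundary_eq_zero)
qed

end
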